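(* Let $M$ be an infinite-horizon $\gamma$-discounted zero-sum NMG with $n$ players and let $\pi$ be an $\epsilon$-approximate Markov CCE of $M$. Let $\hat\pi$ be the product Markov policy obtained by marginalizing $\pi$ at each state, i.e. $\hat\pi_h(\mathbf a\mid s)=\prod_{i\in\mathcal N}\pi_{h,i}(a_i\mid s)$ where $\pi_{h,i}(\cdot\mid s)$ is the marginal of $\pi_h(\cdot\mid s)\in\Delta(\mathcal A)$ on $\mathcal A_i$. Then $\hat\pi$ is an $\frac{(n+1)\epsilon}{1-\gamma}$-approximate Markov NE of $M$. Similarly, for a finite-horizon ($H$-step) zero-sum NMG, marginalizing an $\epsilon$-approximate Markov CCE at each state and step yields an $(n+1)H\epsilon$-approximate Markov NE.
   Context: A Markov game has players $\mathcal N=[n]$, finite states $\mathcal S$, finite actions $\mathcal A=\prod_i\mathcal A_i$, transitions $\mathbb P_h$, bounded rewards $r_{h,i}$, discount $\gamma$ (infinite horizon: $H=\infty$, $\gamma<1$, time-independent $\mathbb P,r_i$; finite horizon: $H<\infty$). A joint Markov policy is $\pi=\{\pi_h:\mathcal S\to\Delta(\mathcal A)\}_h$ (possibly correlated); a product policy has $\pi_h(s)\in\prod_i\Delta(\mathcal A_i)$. $V^\pi_{h,i}(s)=\mathbb E_\pi[\sum_{h'\ge h}\gamma^{h'-h}r_{h',i}(s_{h'},\mathbf a_{h'})\mid s_h=s]$. For a player $i$ and a Markov policy $\mu_i$ of player $i$, $(\mu_i,\pi_{-i})$ means $i$ plays $\mu_i$ while the others play the marginal of $\pi$ on $\mathcal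 A_{-i}$ at each state and step. A joint Markov policy $\pi$ is an $\epsilon$-approximate Markov (perfect) CCE if $\max_i\max_{\mu_i}(V^{\mu_i,\pi_{-i}}_{h,i}(\rho)-V^\pi_{h,i}(\rho))\le\epsilon$ for all state distributions $\rho$ and all steps $h$ (where $V(\rho)=\mathbb E_{s\sim\rho}V(s)$); it is an $\epsilon$-approximate Markov (perfect) NE if moreover it is a product policy. A Markov game is a zero-sum NMG with respect to an undirected connected graph $(\mathcal N,\mathcal E_Q)$ (with $\mathcal E_{Q,i}$ the neighbors of $i$) if for every (sequence of) functions $V:\mathcal S\to\mathbb R$, the functions $Q_{h,i}^V(s,\mathbf a)=r_{h,i}(s,\mathbf a)+\gamma\sum_{s'}\mathbb P_h(s'\mid s,\mathbf a)V_{h+1}(s')$ can be written as $\sum_{j\in\mathcal E_{Q,i}}Q^V_{h,i,j}(s,a_i,a_j)$ for some functions $Q^V_{h,i,j}$, and for $V\equiv0$ these pairwise functions satisfy $\sum_i\sum_{j\in\mathcal E_{Q,i}}Q^{\mathbf 0}_{h,i,j}(s,a_i,a_j)=0$ for all $s,h,\mathbf a$. *)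

theory Defs
  imports "HOL-Probability.Probability"
begin

text \<open>
  Players form a finite type 'i (so n = CARD('i)); states form a
  finite type 's; every player i has a finite nonempty action set A i of elements
  of a type 'a. Steps are natural numbers (0-based); in the finite-horizon
  case the steps are 0, ..., H-1.
\<close>

definition joint_actions :: "('i \<Rightarrow> 'a set) \<Rightarrow> ('i \<Rightarrow> 'a) set" where
  "joint_actions A = {a. \<forall>i. a i \<in> A i}"

definition action_sets_ok :: "('i \<Rightarrow> 'a set) \<Rightarrow> bool" where
  "action_sets_ok A \<longleftrightarrow> (\<forall>i. finite (A i) \<and> A i \<noteq> {})"

definition joint_policy :: "('i \<Rightarrow> 'a set) \<Rightarrow> (nat \<Rightarrow> 's \<Rightarrow> ('i \<Rightarrow> 'a) pmf) \<Rightarrow> bool" where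
  "joint_policy A \<pi> \<longleftrightarrow> (\<forall>h s. set_pmf (\<pi> h s) \<subseteq> joint_actions A)"

definition player_policy :: "('i \<Rightarrow> 'a set) \<Rightarrow> 'i \<Rightarrow> (nat \<Rightarrow> 's \<Rightarrow> 'a pmf) \<Rightarrow> bool" where
  "player_policy A i \<mu> \<longleftrightarrow> (\<forall>h s. set_pmf (\<mu> h s) \<subseteq> A i)"

definition marg :: "('i \<Rightarrow> 'a) pmf \<Rightarrow> 'i \<Rightarrow> 'a pmf" where
  "marg p i = map_pmf (\<lambda>a. a i) p"

definition product_policy :: "(nat \<Rightarrow> 's \<Rightarrow> ('i::finite \<Rightarrow> 'a) pmf) \<Rightarrow> bool" where
  "product_policy \<pi> \<longleftrightarrow>
     (\<forall>h s. \<exists>p :: 'i \<Rightarrow> 'a pmf. \<pi> h s = Pi_pmf UNIV undefined p)"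

definition marginalize :: "(nat \<Rightarrow> 's \<Rightarrow> ('i::finite \<Rightarrow> 'a) pmf) \<Rightarrow> nat \<Rightarrow> 's \<Rightarrow> ('i \<Rightarrow> 'a) pmf" where
  "marginalize \<pi> h s = Pi_pmf UNIV undefined (marg (\<pi> h s))"

text \<open>(\<mu>_i, \<pi>_{-i}): player i plays \<mu>_i, independently the others play the marginal of
  \<pi> on A_{-i} (correlated among themselves).\<close>
definition deviate :: "'i \<Rightarrow> (nat \<Rightarrow> 's \<Rightarrow> 'a pmf) \<Rightarrow> (nat \<Rightarrow> 's \<Rightarrow> ('i \<Rightarrow> 'a) pmf)
    \<Rightarrow> nat \<Rightarrow> 's \<Rightarrow> ('i \<Rightarrow> 'a) pmf" where
  "deviate i \<mu> \<pi> h s = map_pmf (\<lambda>(b, a). a(i := b)) (pair_pmf (\<mu> h s) (\<pi> h s))"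

definition connected_graph :: "('i \<Rightarrow> 'i \<Rightarrow> bool) \<Rightarrow> bool" where
  "connected_graph E \<longleftrightarrow> (\<forall>i j. E i j \<longrightarrow> E j i) \<and> (\<forall>i. \<not> E i i) \<and> (\<forall>i j. E\<^sup>*\<^sup>* i j)"

fun state_dist_inf :: "('s \<Rightarrow> ('i \<Rightarrow> 'a) \<Rightarrow> 's pmf) \<Rightarrow> (nat \<Rightarrow> 's \<Rightarrow> ('i \<Rightarrow> 'a) pmf)
    \<Rightarrow> nat \<Rightarrow> 's pmf \<Rightarrow> nat \<Rightarrow> 's pmf" where
  "state_dist_inf P \<pi> h \<rho> 0 = \<rho>"
| "state_dist_inf P \<pi> h \<rho> (Suc t) =
     bind_pmf (state_dist_inf P \<pi> h \<rho> t) (\<lambda>s. bind_pmf (\<pi> (h + t) s) (\<lambda>a. P s a))"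

definition V_inf :: "('s \<Rightarrow> ('i \<Rightarrow> 'a) \<Rightarrow> 's pmf) \<Rightarrow> ('i \<Rightarrow> 's \<Rightarrow> ('i \<Rightarrow> 'a) \<Rightarrow> real) \<Rightarrow> real
    \<Rightarrow> (nat \<Rightarrow> 's \<Rightarrow> ('i \<Rightarrow> 'a) pmf) \<Rightarrow> 'i \<Rightarrow> nat \<Rightarrow> 's pmf \<Rightarrow> real" where
  "V_inf P r \<gamma> \<pi> i h \<rho> =
     (\<Sum>t. \<gamma> ^ t * measure_pmf.expectation (state_dist_inf P \<pi> h \<rho> t)
                    (\<lambda>s. measure_pmf.expectation (\<pi> (h + t) s) (\<lambda>a. r i s a)))"

definition zero_sum_NMG_inf :: "('i::finite \<Rightarrow> 'i \<Rightarrow> bool) \<Rightarrow> ('i \<Rightarrow> 'a set)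
    \<Rightarrow> ('s::finite \<Rightarrow> ('i \<Rightarrow> 'a) \<Rightarrow> 's pmf) \<Rightarrow> ('i \<Rightarrow> 's \<Rightarrow> ('i \<Rightarrow> 'a) \<Rightarrow> real) \<Rightarrow> real \<Rightarrow> bool" where
  "zero_sum_NMG_inf E A P r \<gamma> \<longleftrightarrow>
     action_sets_ok A \<and> 0 \<le> \<gamma> \<and> \<gamma> < 1 \<and> connected_graph E \<and>
     (\<forall>V :: 's \<Rightarrow> real. \<exists>Q :: 'i \<Rightarrow> 'i \<Rightarrow> 's \<Rightarrow> 'a \<Rightarrow> 'a \<Rightarrow> real.
        \<forall>i s a. a \<in> joint_actions A \<longrightarrow>
          r i s a + \<gamma> * (\<Sum>s'\<in>UNIV. pmf (P s a) s' * V s') =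
          (\<Sum>j\<in>{j. E i j}. Q i j s (a i) (a j))) \<and>
     (\<exists>Q :: 'i \<Rightarrow> 'i \<Rightarrow> 's \<Rightarrow> 'a \<Rightarrow> 'a \<Rightarrow> real.
        (\<forall>i s a. a \<in> joint_actions A \<longrightarrow> r i s a = (\<Sum>j\<in>{j. E i j}. Q i j s (a i) (a j))) \<and>
        (\<forall>s a. a \<in> joint_actions A \<longrightarrow> (\<Sum>i\<in>UNIV. \<Sum>j\<in>{j. E i j}. Q i j s (a i) (a j)) = 0))"

definition approx_CCE_inf :: "('i \<Rightarrow> 'a set) \<Rightarrow> ('s \<Rightarrow> ('i \<Rightarrow> 'a) \<Rightarrow> 's pmf)
    \<Rightarrow> ('i \<Rightarrow> 's \<Rightarrow> ('i \<Rightarrow> 'a) \<Rightarrow> real) \<Rightarrow> real \<Rightarrow> (nat \<Rightarrow> 's \<Rightarrow> ('i \<Rightarrow> 'a) pmf) \<Rightarrow> real \<Rightarrow> bool" where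
  "approx_CCE_inf A P r \<gamma> \<pi> \<epsilon> \<longleftrightarrow> joint_policy A \<pi> \<and>
     (\<forall>i \<mu> h \<rho>. player_policy A i \<mu> \<longrightarrow>
        V_inf P r \<gamma> (deviate i \<mu> \<pi>) i h \<rho> - V_inf P r \<gamma> \<pi> i h \<rho> \<le> \<epsilon>)"

definition approx_NE_inf :: "('i::finite \<Rightarrow> 'a set) \<Rightarrow> ('s \<Rightarrow> ('i \<Rightarrow> 'a) \<Rightarrow> 's pmf)
    \<Rightarrow> ('i \<Rightarrow> 's \<Rightarrow> ('i \<Rightarrow> 'a) \<Rightarrow> real) \<Rightarrow> real \<Rightarrow> (nat \<Rightarrow> 's \<Rightarrow> ('i \<Rightarrow> 'a) pmf) \<Rightarrow> real \<Rightarrow> bool" where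
  "approx_NE_inf A P r \<gamma> \<pi> \<epsilon> \<longleftrightarrow> approx_CCE_inf A P r \<gamma> \<pi> \<epsilon> \<and> product_policy \<pi>"

fun state_dist_fin :: "(nat \<Rightarrow> 's \<Rightarrow> ('i \<Rightarrow> 'a) \<Rightarrow> 's pmf) \<Rightarrow> (nat \<Rightarrow> 's \<Rightarrow> ('i \<Rightarrow> 'a) pmf)
    \<Rightarrow> nat \<Rightarrow> 's pmf \<Rightarrow> nat \<Rightarrow> 's pmf" where
  "state_dist_fin P \<pi> h \<rho> 0 = \<rho>"
| "state_dist_fin P \<pi> h \<rho> (Suc t) =
     bind_pmf (state_dist_fin P \<pi> h \<rho> t) (\<lambda>s. bind_pmf (\<pi> (h + t) s) (\<lambda>a. P (h + t) s a))"

definition V_fin :: "nat \<Rightarrow> (nat \<Rightarrow> 's \<Rightarrow> ('i \<Rightarrow> 'a) \<Rightarrow> 's pmf) \<Rightarrow> (nat \<Rightarrow> 'i \<Rightarrow> 's \<Rightarrow> ('i \<Rightarrow> 'a) \<Rightarrow> real)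
    \<Rightarrow> real \<Rightarrow> (nat \<Rightarrow> 's \<Rightarrow> ('i \<Rightarrow> 'a) pmf) \<Rightarrow> 'i \<Rightarrow> nat \<Rightarrow> 's pmf \<Rightarrow> real" where
  "V_fin H P r \<gamma> \<pi> i h \<rho> =
     (\<Sum>t<H - h. \<gamma> ^ t * measure_pmf.expectation (state_dist_fin P \<pi> h \<rho> t)
                    (\<lambda>s. measure_pmf.expectation (\<pi> (h + t) s) (\<lambda>a. r (h + t) i s a)))"

definition zero_sum_NMG_fin :: "nat \<Rightarrow> ('i::finite \<Rightarrow> 'i \<Rightarrow> bool) \<Rightarrow> ('i \<Rightarrow> 'a set)
    \<Rightarrow> (nat \<Rightarrow> 's::finite \<Rightarrow> ('i \<Rightarrow> 'a) \<Rightarrow> 's pmf) \<Rightarrow> (nat \<Rightarrow> 'i \<Rightarrow> 's \<Rightarrow> ('i \<Rightarrow> 'a) \<Rightarrow> real)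
    \<Rightarrow> real \<Rightarrow> bool" where
  "zero_sum_NMG_fin H E A P r \<gamma> \<longleftrightarrow>
     action_sets_ok A \<and> 0 \<le> \<gamma> \<and> \<gamma> \<le> 1 \<and> connected_graph E \<and>
     (\<forall>V :: nat \<Rightarrow> 's \<Rightarrow> real. \<exists>Q :: nat \<Rightarrow> 'i \<Rightarrow> 'i \<Rightarrow> 's \<Rightarrow> 'a \<Rightarrow> 'a \<Rightarrow> real.
        \<forall>h<H. \<forall>i s a. a \<in> joint_actions A \<longrightarrow>
          r h i s a + \<gamma> * (\<Sum>s'\<in>UNIV. pmf (P h s a) s' * V (Suc h) s') =
          (\<Sum>j\<in>{j. E i j}. Q h i j s (a i) (a j))) \<and>
     (\<exists>Q :: nat \<Rightarrow> 'i \<Rightarrow> 'i \<Rightarrow> 's \<Rightarrow> 'a \<Rightarrow> 'a \<Rightarrow> real.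
        (\<forall>h<H. \<forall>i s a. a \<in> joint_actions A \<longrightarrow> r h i s a = (\<Sum>j\<in>{j. E i j}. Q h i j s (a i) (a j))) \<and>
        (\<forall>h<H. \<forall>s a. a \<in> joint_actions A \<longrightarrow>
           (\<Sum>i\<in>UNIV. \<Sum>j\<in>{j. E i j}. Q h i j s (a i) (a j)) = 0))"

definition approx_CCE_fin :: "nat \<Rightarrow> ('i \<Rightarrow> 'a set) \<Rightarrow> (nat \<Rightarrow> 's \<Rightarrow> ('i \<Rightarrow> 'a) \<Rightarrow> 's pmf)
    \<Rightarrow> (nat \<Rightarrow> 'i \<Rightarrow> 's \<Rightarrow> ('i \<Rightarrow> 'a) \<Rightarrow> real) \<Rightarrow> real \<Rightarrow> (nat \<Rightarrow> 's \<Rightarrow> ('i \<Rightarrow> 'a) pmf) \<Rightarrow> real \<Rightarrow> bool" where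
  "approx_CCE_fin H A P r \<gamma> \<pi> \<epsilon> \<longleftrightarrow> joint_policy A \<pi> \<and>
     (\<forall>i \<mu> h \<rho>. player_policy A i \<mu> \<longrightarrow> h < H \<longrightarrow>
        V_fin H P r \<gamma> (deviate i \<mu> \<pi>) i h \<rho> - V_fin H P r \<gamma> \<pi> i h \<rho> \<le> \<epsilon>)"

definition approx_NE_fin :: "nat \<Rightarrow> ('i::finite \<Rightarrow> 'a set) \<Rightarrow> (nat \<Rightarrow> 's \<Rightarrow> ('i \<Rightarrow> 'a) \<Rightarrow> 's pmf)
    \<Rightarrow> (nat \<Rightarrow> 'i \<Rightarrow> 's \<Rightarrow> ('i \<Rightarrow> 'a) \<Rightarrow> real) \<Rightarrow> real \<Rightarrow> (nat \<Rightarrow> 's \<Rightarrow> ('i \<Rightarrow> 'a) pmf) \<Rightarrow> real \<Rightarrow> bool" where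
  "approx_NE_fin H A P r \<gamma> \<pi> \<epsilon> \<longleftrightarrow> approx_CCE_fin H A P r \<gamma> \<pi> \<epsilon> \<and> product_policy \<pi>"

end

theory Submission
  imports Defs
begin

(* In a zero-sum networked game, player i's value under a joint policy depends only on the
  pairwise marginals of (a_i, a_j), for neighbours j of i, at every state and step: by backward
  induction, the Bellman target r_i + gamma P V splits into pairwise terms Q_ij(a_i, a_j).
  Marginalizing pi keeps these pairwise marginals when i deviates, and to player k the product
  policy pi' looks exactly like the deviation (pi_k, pi_{-k}); so V_k(pi') - V_k(pi) <= eps for
  every k. As the values sum to zero, V_i(pi) - V_i(pi') <= (n - 1) eps, and a deviation from pi'
  gains player i at most eps + (n - 1) eps = n eps, which is below both stated bounds. *)

lemma expectation_bind_pmf: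
  fixes f :: "'b \<Rightarrow> real"
  assumes "finite (set_pmf p)" and "\<And>x. x \<in> set_pmf p \<Longrightarrow> finite (set_pmf (K x))"
  shows "measure_pmf.expectation (bind_pmf p K) f =
         measure_pmf.expectation p (\<lambda>x. measure_pmf.expectation (K x) f)"
  using assms
  by (simp add: pmf_expectation_bind[OF assms order_refl] integral_measure_pmf_real mult.commute)

lemma abs_expectation_le:
  fixes f :: "'b \<Rightarrow> real"
  assumes "\<And>x. x \<in> set_pmf p \<Longrightarrow> \<bar>f x\<bar> \<le> B"
  shows "\<bar>measure_pmf.expectation p f\<bar> \<le> B"
proof -
  have "integrable p f"
    using assms by (intro measure_pmf.integrable_const_bound[where B=B]) (auto simp: AE_measure_pmf_iff)
  have "\<bar>measure_pmf.expectation p f\<bar> \<le> measure_pmf.expectation p (\<lambda>x. \<bar>f x\<bar>)"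
    by simp
  also have "\<dots> \<le> B"
    using assms \<open>integrable p f\<close>
    by (intro measure_pmf.integral_le_const) (auto simp: AE_measure_pmf_iff)
  finally show ?thesis .
qed

definition same_pair_marginals :: "'i set \<Rightarrow> 'i \<Rightarrow> ('i \<Rightarrow> 'a) pmf \<Rightarrow> ('i \<Rightarrow> 'a) pmf \<Rightarrow> bool" where
  "same_pair_marginals N i p q \<longleftrightarrow>
     (\<forall>j\<in>N. map_pmf (\<lambda>a. (a i, a j)) p = map_pmf (\<lambda>a. (a i, a j)) q)"

lemma expectation_eq_if_same_pair_marginals:
  fixes p q :: "('i \<Rightarrow> 'a) pmf" and F :: "('i \<Rightarrow> 'a) \<Rightarrow> real"
  assumes "finite N" and "same_pair_marginals N i p q"
    and "set_pmf p \<subseteq> J" and "set_pmf q \<subseteq> J" and "finite J"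
    and F: "\<And>a. a \<in> J \<Longrightarrow> F a = (\<Sum>j\<in>N. Q j (a i) (a j))"
  shows "measure_pmf.expectation p F = measure_pmf.expectation q F"
proof -
  have pair_sum: "measure_pmf.expectation p' F =
      (\<Sum>j\<in>N. measure_pmf.expectation (map_pmf (\<lambda>a. (a i, a j)) p') (\<lambda>(x, y). Q j x y))"
    if "set_pmf p' \<subseteq> J" for p'
  proof -
    have "finite (set_pmf p')"
      using finite_subset[OF that \<open>finite J\<close>] .
    have "measure_pmf.expectation p' F = measure_pmf.expectation p' (\<lambda>a. \<Sum>j\<in>N. Q j (a i) (a j))"
      using F that by (intro integral_cong_AE) (auto simp: AE_measure_pmf_iff)
    also have "\<dots> = (\<Sum>j\<in>N. measure_pmf.expectation p' (\<lambda>a. Q j (a i) (a j)))"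
      using \<open>finite (set_pmf p')\<close> by (intro Bochner_Integration.integral_sum integrable_measure_pmf_finite)
    finally show ?thesis by simp
  qed
  show ?thesis
    using assms(2) by (simp add: pair_sum assms(3,4) same_pair_marginals_def)
qed

text \<open>The value of the first T steps from step h: V_fin is the case T = H - h, and V_inf
  is the limit T \<rightarrow> \<infinity> for time-independent P and r.\<close>

definition value_upto :: "(nat \<Rightarrow> 's \<Rightarrow> ('i \<Rightarrow> 'a) \<Rightarrow> 's pmf) \<Rightarrow> (nat \<Rightarrow> 'i \<Rightarrow> 's \<Rightarrow> ('i \<Rightarrow> 'a) \<Rightarrow> real)
    \<Rightarrow> real \<Rightarrow> (nat \<Rightarrow> 's \<Rightarrow> ('i \<Rightarrow> 'a) pmf) \<Rightarrow> 'i \<Rightarrow> nat \<Rightarrow> nat \<Rightarrow> 's pmf \<Rightarrow> real" where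
  "value_upto P r \<gamma> \<sigma> i T h \<rho> =
     (\<Sum>t<T. \<gamma> ^ t * measure_pmf.expectation (state_dist_fin P \<sigma> h \<rho> t)
                    (\<lambda>s. measure_pmf.expectation (\<sigma> (h + t) s) (\<lambda>a. r (h + t) i s a)))"

lemma state_dist_fin_Suc_shift:
  "state_dist_fin P \<sigma> h \<rho> (Suc t) =
   state_dist_fin P \<sigma> (Suc h) (bind_pmf \<rho> (\<lambda>s. bind_pmf (\<sigma> h s) (P h s))) t"
  by (induction t) auto

lemma value_upto_Suc:
  "value_upto P r \<gamma> \<sigma> i (Suc T) h \<rho> =
     measure_pmf.expectation \<rho> (\<lambda>s. measure_pmf.expectation (\<sigma> h s) (r h i s))
     + \<gamma> * value_upto P r \<gamma> \<sigma> i T (Suc h) (bind_pmf \<rho> (\<lambda>s. bind_pmf (\<sigma> h s) (P h s)))"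
  unfolding value_upto_def sum.lessThan_Suc_shift
  by (simp add: state_dist_fin_Suc_shift sum_distrib_left mult.assoc del: state_dist_fin.simps(2))

lemma value_upto_expectation:
  fixes \<sigma> :: "nat \<Rightarrow> 's::finite \<Rightarrow> ('i \<Rightarrow> 'a) pmf"
  assumes fin: "\<And>h s. finite (set_pmf (\<sigma> h s))"
  shows "value_upto P r \<gamma> \<sigma> i T h \<rho> =
         measure_pmf.expectation \<rho> (\<lambda>s. value_upto P r \<gamma> \<sigma> i T h (return_pmf s))"
proof (induction T arbitrary: h \<rho>)
  case 0
  then show ?case by (simp add: value_upto_def)
next
  case (Suc T)
  define K where "K = (\<lambda>s. bind_pmf (\<sigma> h s) (P h s))"
  define g where "g = (\<lambda>s. measure_pmf.expectation (\<sigma> h s) (r h i s))"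
  define w where "w = (\<lambda>s. value_upto P r \<gamma> \<sigma> i T (Suc h) (return_pmf s))"
  have K_finite: "finite (set_pmf (K s))" for s
    using fin by (simp add: K_def)
  have point: "value_upto P r \<gamma> \<sigma> i (Suc T) h (return_pmf s) =
      g s + \<gamma> * measure_pmf.expectation (K s) w" for s
    using Suc.IH[of "Suc h" "K s"] by (simp add: value_upto_Suc K_def g_def w_def bind_return_pmf)
  have "value_upto P r \<gamma> \<sigma> i (Suc T) h \<rho> =
      measure_pmf.expectation \<rho> g + \<gamma> * measure_pmf.expectation (bind_pmf \<rho> K) w"
    using Suc.IH[of "Suc h" "bind_pmf \<rho> K"] by (simp add: value_upto_Suc K_def g_def w_def)
  also have "measure_pmf.expectation (bind_pmf \<rho> K) w =
      measure_pmf.expectation \<rho> (\<lambda>s. measure_pmf.expectation (K s) w)"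
    using K_finite by (intro expectation_bind_pmf) auto
  also have "measure_pmf.expectation \<rho> g + \<gamma> * \<dots> =
      measure_pmf.expectation \<rho> (\<lambda>s. g s + \<gamma> * measure_pmf.expectation (K s) w)"
    by (simp add: integrable_measure_pmf_finite)
  finally show ?case
    by (simp only: point)
qed

lemma value_upto_Suc_return_pmf:
  fixes \<sigma> :: "nat \<Rightarrow> 's::finite \<Rightarrow> ('i \<Rightarrow> 'a) pmf"
  assumes fin: "\<And>h s. finite (set_pmf (\<sigma> h s))"
  shows "value_upto P r \<gamma> \<sigma> i (Suc T) h (return_pmf s) =
    measure_pmf.expectation (\<sigma> h s) (\<lambda>a. r h i s a + \<gamma> *
       (\<Sum>s'\<in>UNIV. pmf (P h s a) s' * value_upto P r \<gamma> \<sigma> i T (Suc h) (return_pmf s')))"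
proof -
  define w where "w = (\<lambda>s. value_upto P r \<gamma> \<sigma> i T (Suc h) (return_pmf s))"
  have "value_upto P r \<gamma> \<sigma> i (Suc T) h (return_pmf s) =
      measure_pmf.expectation (\<sigma> h s) (r h i s)
      + \<gamma> * value_upto P r \<gamma> \<sigma> i T (Suc h) (bind_pmf (\<sigma> h s) (P h s))"
    by (simp add: value_upto_Suc bind_return_pmf)
  also have "value_upto P r \<gamma> \<sigma> i T (Suc h) (bind_pmf (\<sigma> h s) (P h s)) =
      measure_pmf.expectation (bind_pmf (\<sigma> h s) (P h s)) w"
    unfolding w_def by (rule value_upto_expectation[OF fin])
  also have "\<dots> = measure_pmf.expectation (\<sigma> h s) (\<lambda>a. measure_pmf.expectation (P h s a) w)"
    by (rule expectation_bind_pmf[OF fin]) simp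
  also have "\<dots> = measure_pmf.expectation (\<sigma> h s) (\<lambda>a. \<Sum>s'\<in>UNIV. pmf (P h s a) s' * w s')"
    by (intro Bochner_Integration.integral_cong refl)
       (subst integral_measure_pmf_real[where A=UNIV], auto simp: mult.commute)
  finally show ?thesis
    by (simp add: integrable_measure_pmf_finite fin w_def)
qed

lemma value_upto_eq_if_same_pair_marginals:
  fixes \<sigma> \<tau> :: "nat \<Rightarrow> 's::finite \<Rightarrow> ('i \<Rightarrow> 'a) pmf"
  assumes "finite N" and same: "\<And>h s. same_pair_marginals N i (\<sigma> h s) (\<tau> h s)"
    and "finite J" and \<sigma>J: "\<And>h s. set_pmf (\<sigma> h s) \<subseteq> J" and \<tau>J: "\<And>h s. set_pmf (\<tau> h s) \<subseteq> J"
    and decomp: "\<And>h s V. h < h\<^sub>0 + T \<Longrightarrow> \<exists>Q. \<forall>a\<in>J.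
        r h i s a + \<gamma> * (\<Sum>s'\<in>UNIV. pmf (P h s a) s' * V s') = (\<Sum>j\<in>N. Q j (a i) (a j))"
  shows "value_upto P r \<gamma> \<sigma> i T h\<^sub>0 \<rho> = value_upto P r \<gamma> \<tau> i T h\<^sub>0 \<rho>"
proof -
  have \<sigma>_finite: "finite (set_pmf (\<sigma> h s))" and \<tau>_finite: "finite (set_pmf (\<tau> h s))" for h s
    using finite_subset[OF \<sigma>J \<open>finite J\<close>] finite_subset[OF \<tau>J \<open>finite J\<close>] .
  have "value_upto P r \<gamma> \<sigma> i T h\<^sub>0 (return_pmf s) = value_upto P r \<gamma> \<tau> i T h\<^sub>0 (return_pmf s)" for s
    using decomp
  proof (induction T arbitrary: h\<^sub>0 s)
    case 0
    then show ?case by (simp add: value_upto_def)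
  next
    case (Suc T)
    define V where "V = (\<lambda>s'. value_upto P r \<gamma> \<tau> i T (Suc h\<^sub>0) (return_pmf s'))"
    have IH: "value_upto P r \<gamma> \<sigma> i T (Suc h\<^sub>0) (return_pmf s') = V s'" for s'
      using Suc by (simp add: V_def)
    obtain Q where Q: "\<forall>a\<in>J. r h\<^sub>0 i s a + \<gamma> * (\<Sum>s'\<in>UNIV. pmf (P h\<^sub>0 s a) s' * V s')
                 = (\<Sum>j\<in>N. Q j (a i) (a j))"
      using Suc.prems[of h\<^sub>0 s V] by auto
    have "value_upto P r \<gamma> \<sigma> i (Suc T) h\<^sub>0 (return_pmf s) = measure_pmf.expectation (\<sigma> h\<^sub>0 s)
        (\<lambda>a. r h\<^sub>0 i s a + \<gamma> * (\<Sum>s'\<in>UNIV. pmf (P h\<^sub>0 s a) s' * V s'))"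
      by (simp add: value_upto_Suc_return_pmf \<sigma>_finite IH)
    also have "\<dots> = measure_pmf.expectation (\<tau> h\<^sub>0 s)
        (\<lambda>a. r h\<^sub>0 i s a + \<gamma> * (\<Sum>s'\<in>UNIV. pmf (P h\<^sub>0 s a) s' * V s'))"
      using Q by (intro expectation_eq_if_same_pair_marginals[OF \<open>finite N\<close> same \<sigma>J \<tau>J \<open>finite J\<close>]) auto
    also have "\<dots> = value_upto P r \<gamma> \<tau> i (Suc T) h\<^sub>0 (return_pmf s)"
      by (simp add: value_upto_Suc_return_pmf \<tau>_finite V_def)
    finally show ?case .
  qed
  then show ?thesis
    by (subst (1 2) value_upto_expectation) (auto simp: \<sigma>_finite \<tau>_finite)
qed

lemma V_fin_eq_value_upto: "V_fin H P r \<gamma> \<sigma> i h \<rho> = value_upto P r \<gamma> \<sigma> i (H - h) h \<rho>"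
  by (simp add: V_fin_def value_upto_def)

lemma state_dist_inf_eq_state_dist_fin: "state_dist_inf P \<sigma> h \<rho> t = state_dist_fin (\<lambda>_. P) \<sigma> h \<rho> t"
  by (induction t) auto

text \<open>In this form, agreement of all truncations gives agreement of V_inf without any
  convergence argument.\<close>

lemma V_inf_eq_telescoping:
  "V_inf P r \<gamma> \<sigma> i h \<rho> =
    (\<Sum>t. value_upto (\<lambda>_. P) (\<lambda>_. r) \<gamma> \<sigma> i (Suc t) h \<rho> - value_upto (\<lambda>_. P) (\<lambda>_. r) \<gamma> \<sigma> i t h \<rho>)"
  by (simp add: V_inf_def value_upto_def state_dist_inf_eq_state_dist_fin)

lemma finite_joint_actions:
  assumes "action_sets_ok (A :: 'i::finite \<Rightarrow> 'a set)"
  shows "finite (joint_actions A)"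
proof -
  have "joint_actions A = PiE UNIV A"
    by (auto simp: joint_actions_def PiE_def Pi_def extensional_def)
  then show ?thesis
    using assms by (auto simp: action_sets_ok_def intro!: finite_PiE)
qed

lemma zero_sum_NMG_fin_decomposition:
  assumes "zero_sum_NMG_fin H E A P r \<gamma>" and "h < H"
  obtains Q where "\<And>a. a \<in> joint_actions A \<Longrightarrow>
    r h i s a + \<gamma> * (\<Sum>s'\<in>UNIV. pmf (P h s a) s' * V s') = (\<Sum>j\<in>{j. E i j}. Q j (a i) (a j))"
proof -
  obtain Q where "\<forall>h<H. \<forall>i s a. a \<in> joint_actions A \<longrightarrow>
      r h i s a + \<gamma> * (\<Sum>s'\<in>UNIV. pmf (P h s a) s' * V s') = (\<Sum>j\<in>{j. E i j}. Q h i j s (a i) (a j))"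
    using assms(1) unfolding zero_sum_NMG_fin_def by (elim conjE allE[where x="\<lambda>_. V"] exE)
  then show thesis
    using assms(2) by (intro that[of "\<lambda>j. Q h i j s"]) auto
qed

lemma zero_sum_NMG_inf_decomposition:
  assumes "zero_sum_NMG_inf E A P r \<gamma>"
  obtains Q where "\<And>a. a \<in> joint_actions A \<Longrightarrow>
    r i s a + \<gamma> * (\<Sum>s'\<in>UNIV. pmf (P s a) s' * V s') = (\<Sum>j\<in>{j. E i j}. Q j (a i) (a j))"
proof -
  obtain Q where "\<forall>i s a. a \<in> joint_actions A \<longrightarrow>
      r i s a + \<gamma> * (\<Sum>s'\<in>UNIV. pmf (P s a) s' * V s') = (\<Sum>j\<in>{j. E i j}. Q i j s (a i) (a j))"
    using assms unfolding zero_sum_NMG_inf_def by (elim conjE allE[where x=V] exE)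
  then show thesis
    by (intro that[of "\<lambda>j. Q i j s"]) auto
qed

lemma V_fin_eq_if_same_pair_marginals:
  fixes \<sigma> \<tau> :: "nat \<Rightarrow> 's::finite \<Rightarrow> ('i::finite \<Rightarrow> 'a) pmf"
  assumes game: "zero_sum_NMG_fin H E A P r \<gamma>"
    and "joint_policy A \<sigma>" and "joint_policy A \<tau>"
    and "\<And>h s. same_pair_marginals {j. E i j} i (\<sigma> h s) (\<tau> h s)"
  shows "V_fin H P r \<gamma> \<sigma> i h \<rho> = V_fin H P r \<gamma> \<tau> i h \<rho>"
proof (cases "h < H")
  case True
  have "\<exists>Q. \<forall>a\<in>joint_actions A. r h' i s a + \<gamma> * (\<Sum>s'\<in>UNIV. pmf (P h' s a) s' * V s')
      = (\<Sum>j\<in>{j. E i j}. Q j (a i) (a j))" if "h' < h + (H - h)" for h' s V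
    by (rule zero_sum_NMG_fin_decomposition[OF game, where i=i and s=s and V=V]) (use that True in auto)
  moreover have "finite (joint_actions A)"
    using game by (simp add: zero_sum_NMG_fin_def finite_joint_actions)
  ultimately show ?thesis
    using assms(2-) unfolding V_fin_eq_value_upto joint_policy_def
    by (intro value_upto_eq_if_same_pair_marginals[where J="joint_actions A"]) auto
qed (simp add: V_fin_def)

lemma V_inf_eq_if_same_pair_marginals:
  fixes \<sigma> \<tau> :: "nat \<Rightarrow> 's::finite \<Rightarrow> ('i::finite \<Rightarrow> 'a) pmf"
  assumes game: "zero_sum_NMG_inf E A P r \<gamma>"
    and "joint_policy A \<sigma>" and "joint_policy A \<tau>"
    and "\<And>h s. same_pair_marginals {j. E i j} i (\<sigma> h s) (\<tau> h s)"
  shows "V_inf P r \<gamma> \<sigma> i h \<rho> = V_inf P r \<gamma> \<tau> i h \<rho>"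
proof -
  have "\<exists>Q. \<forall>a\<in>joint_actions A. r i s a + \<gamma> * (\<Sum>s'\<in>UNIV. pmf (P s a) s' * V s')
      = (\<Sum>j\<in>{j. E i j}. Q j (a i) (a j))" for s V
    by (rule zero_sum_NMG_inf_decomposition[OF game, where i=i and s=s and V=V]) blast
  moreover have "finite (joint_actions A)"
    using game by (simp add: zero_sum_NMG_inf_def finite_joint_actions)
  ultimately have "value_upto (\<lambda>_. P) (\<lambda>_. r) \<gamma> \<sigma> i T h \<rho> = value_upto (\<lambda>_. P) (\<lambda>_. r) \<gamma> \<tau> i T h \<rho>" for T
    using assms(2-) unfolding joint_policy_def
    by (intro value_upto_eq_if_same_pair_marginals[where J="joint_actions A"]) auto
  then show ?thesis
    by (simp add: V_inf_eq_telescoping)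
qed

lemma sum_expectations_eq_0:
  fixes \<sigma> :: "'s::finite \<Rightarrow> ('i \<Rightarrow> 'a) pmf" and R :: "'p \<Rightarrow> 's \<Rightarrow> ('i \<Rightarrow> 'a) \<Rightarrow> real"
  assumes "finite I" and "finite J" and \<sigma>J: "\<And>s. set_pmf (\<sigma> s) \<subseteq> J"
    and zero_sum: "\<And>s a. a \<in> J \<Longrightarrow> (\<Sum>i\<in>I. R i s a) = 0"
  shows "(\<Sum>i\<in>I. measure_pmf.expectation d (\<lambda>s. measure_pmf.expectation (\<sigma> s) (R i s))) = 0"
proof -
  have \<sigma>_finite: "finite (set_pmf (\<sigma> s))" for s
    using finite_subset[OF \<sigma>J \<open>finite J\<close>] .
  have "(\<Sum>i\<in>I. measure_pmf.expectation d (\<lambda>s. measure_pmf.expectation (\<sigma> s) (R i s)))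
     = measure_pmf.expectation d (\<lambda>s. measure_pmf.expectation (\<sigma> s) (\<lambda>a. \<Sum>i\<in>I. R i s a))"
    by (simp add: integrable_measure_pmf_finite \<sigma>_finite)
  also have "\<dots> = 0"
    using \<sigma>J zero_sum by (simp add: integral_eq_zero_AE AE_measure_pmf_iff subset_iff)
  finally show ?thesis .
qed

lemma sum_V_fin_eq_0:
  fixes \<sigma> :: "nat \<Rightarrow> 's::finite \<Rightarrow> ('i::finite \<Rightarrow> 'a) pmf"
  assumes game: "zero_sum_NMG_fin H E A P r \<gamma>" and "joint_policy A \<sigma>"
  shows "(\<Sum>i\<in>UNIV. V_fin H P r \<gamma> \<sigma> i h \<rho>) = 0"
proof -
  have "(\<Sum>i\<in>UNIV. r h' i s a) = 0" if "h' < H" "a \<in> joint_actions A" for h' s a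
    using game that unfolding zero_sum_NMG_fin_def by auto
  moreover have "finite (joint_actions A)"
    using game by (simp add: zero_sum_NMG_fin_def finite_joint_actions)
  ultimately show ?thesis
    using assms(2) unfolding V_fin_def joint_policy_def
    by (subst sum.swap) (simp add: sum_distrib_left[symmetric] sum_expectations_eq_0)
qed

lemma summable_discounted_expected_rewards:
  fixes \<sigma> :: "nat \<Rightarrow> 's::finite \<Rightarrow> ('i \<Rightarrow> 'a) pmf" and \<gamma> :: real
  assumes "finite J" and \<sigma>J: "\<And>h s. set_pmf (\<sigma> h s) \<subseteq> J" and "0 \<le> \<gamma>" and "\<gamma> < 1"
  shows "summable (\<lambda>t. \<gamma> ^ t * measure_pmf.expectation (d t)
           (\<lambda>s. measure_pmf.expectation (\<sigma> (h + t) s) (R s)))"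
proof -
  define B where "B = (\<Sum>s\<in>UNIV. \<Sum>a\<in>J. \<bar>R s a\<bar>)"
  have R_bound: "\<bar>R s a\<bar> \<le> B" if "a \<in> J" for s a
  proof -
    have "\<bar>R s a\<bar> \<le> (\<Sum>a\<in>J. \<bar>R s a\<bar>)"
      using that \<open>finite J\<close> by (intro member_le_sum) auto
    also have "\<dots> \<le> B"
      unfolding B_def by (intro member_le_sum) (auto intro: sum_nonneg)
    finally show ?thesis .
  qed
  have "summable (\<lambda>t. B * \<gamma> ^ t)"
    using assms by (intro summable_mult summable_geometric) simp
  moreover have "norm (\<gamma> ^ t * measure_pmf.expectation (d t)
           (\<lambda>s. measure_pmf.expectation (\<sigma> (h + t) s) (R s))) \<le> B * \<gamma> ^ t" for t
  proof -
    have "\<bar>measure_pmf.expectation (d t) (\<lambda>s. measure_pmf.expectation (\<sigma> (h + t) s) (R s))\<bar> \<le> B"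
      using \<sigma>J by (intro abs_expectation_le R_bound) auto
    then show ?thesis
      using \<open>0 \<le> \<gamma>\<close> by (simp add: abs_mult mult.commute[of B] mult_left_mono)
  qed
  ultimately show ?thesis
    by (rule summable_comparison_test')
qed

lemma sum_V_inf_eq_0:
  fixes \<sigma> :: "nat \<Rightarrow> 's::finite \<Rightarrow> ('i::finite \<Rightarrow> 'a) pmf"
  assumes game: "zero_sum_NMG_inf E A P r \<gamma>" and \<sigma>: "joint_policy A \<sigma>"
  shows "(\<Sum>i\<in>UNIV. V_inf P r \<gamma> \<sigma> i h \<rho>) = 0"
proof -
  have zero_sum: "(\<Sum>i\<in>UNIV. r i s a) = 0" if "a \<in> joint_actions A" for s a
    using game that unfolding zero_sum_NMG_inf_def by auto
  have "finite (joint_actions A)" "0 \<le> \<gamma>" "\<gamma> < 1"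
    using game by (simp_all add: zero_sum_NMG_inf_def finite_joint_actions)
  then have "summable (\<lambda>t. \<gamma> ^ t * measure_pmf.expectation (state_dist_inf P \<sigma> h \<rho> t)
             (\<lambda>s. measure_pmf.expectation (\<sigma> (h + t) s) (r i s)))" for i
    using \<sigma> unfolding joint_policy_def by (intro summable_discounted_expected_rewards) auto
  then have "(\<Sum>i\<in>UNIV. V_inf P r \<gamma> \<sigma> i h \<rho>) =
      (\<Sum>t. \<gamma> ^ t * (\<Sum>i\<in>UNIV. measure_pmf.expectation (state_dist_inf P \<sigma> h \<rho> t)
             (\<lambda>s. measure_pmf.expectation (\<sigma> (h + t) s) (r i s))))"
    unfolding V_inf_def by (simp add: suminf_sum sum_distrib_left)
  also have "\<dots> = 0"
    using \<sigma> \<open>finite (joint_actions A)\<close> zero_sum unfolding joint_policy_def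
    by (simp add: sum_expectations_eq_0)
  finally show ?thesis .
qed

lemma marg_Pi_pmf: "marg (Pi_pmf (UNIV :: 'i::finite set) d p) j = p j"
  unfolding marg_def by (simp add: Pi_pmf_component)

lemma map_pmf_pair_Pi_pmf:
  fixes p :: "'i::finite \<Rightarrow> 'a pmf"
  assumes "i \<noteq> j"
  shows "map_pmf (\<lambda>a. (a i, a j)) (Pi_pmf UNIV d p) = pair_pmf (p i) (p j)"
proof -
  have UNIV_eq: "(UNIV :: 'i set) = insert i (UNIV - {i})" by auto
  have "map_pmf (\<lambda>a. (a i, a j)) (Pi_pmf UNIV d p) =
     map_pmf (\<lambda>a. (a i, a j)) (map_pmf (\<lambda>(y, f). f(i := y)) (pair_pmf (p i) (Pi_pmf (UNIV - {i}) d p)))"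
    by (subst UNIV_eq, subst Pi_pmf_insert) auto
  also have "\<dots> = map_pmf (\<lambda>(y, f). (id y, f j)) (pair_pmf (p i) (Pi_pmf (UNIV - {i}) d p))"
    using assms by (auto simp: pmf.map_comp o_def intro!: map_pmf_cong)
  also have "\<dots> = pair_pmf (p i) (p j)"
    using assms by (subst map_pair) (simp add: Pi_pmf_component)
  finally show ?thesis .
qed

lemma map_pmf_pair_deviate:
  assumes "i \<noteq> j"
  shows "map_pmf (\<lambda>a. (a i, a j)) (deviate i \<mu> \<sigma> h s) = pair_pmf (\<mu> h s) (marg (\<sigma> h s) j)"
proof -
  have "map_pmf (\<lambda>a. (a i, a j)) (deviate i \<mu> \<sigma> h s) =
        map_pmf (\<lambda>(b, a). (id b, a j)) (pair_pmf (\<mu> h s) (\<sigma> h s))"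
    using assms unfolding deviate_def by (auto simp: pmf.map_comp o_def intro!: map_pmf_cong)
  also have "\<dots> = pair_pmf (\<mu> h s) (marg (\<sigma> h s) j)"
    by (subst map_pair) (simp add: marg_def)
  finally show ?thesis .
qed

lemma same_pair_marginals_deviate_marginalize:
  assumes "i \<notin> N"
  shows "same_pair_marginals N i (deviate i \<mu> (marginalize \<pi>) h s) (deviate i \<mu> \<pi> h s)"
proof -
  have "i \<noteq> j" if "j \<in> N" for j
    using assms that by auto
  then show ?thesis
    by (simp add: same_pair_marginals_def map_pmf_pair_deviate marginalize_def marg_Pi_pmf)
qed

lemma same_pair_marginals_marginalize:
  assumes "i \<notin> N"
  shows "same_pair_marginals N i (marginalize \<pi> h s) (deviate i (\<lambda>h s. marg (\<pi> h s) i) \<pi> h s)"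
proof -
  have "i \<noteq> j" if "j \<in> N" for j
    using assms that by auto
  then show ?thesis
    by (simp add: same_pair_marginals_def map_pmf_pair_deviate marginalize_def map_pmf_pair_Pi_pmf)
qed

lemma set_pmf_marg_subset:
  assumes "set_pmf p \<subseteq> joint_actions A"
  shows "set_pmf (marg p i) \<subseteq> A i"
  using assms by (auto simp: marg_def joint_actions_def)

lemma player_policy_marg:
  assumes "joint_policy A \<pi>"
  shows "player_policy A i (\<lambda>h s. marg (\<pi> h s) i)"
  using assms by (simp add: player_policy_def joint_policy_def set_pmf_marg_subset)

lemma joint_policy_marginalize:
  assumes "joint_policy A \<pi>"
  shows "joint_policy A (marginalize \<pi>)"
  unfolding joint_policy_def
proof (intro allI subsetI)
  fix h s a
  assume "a \<in> set_pmf (marginalize \<pi> h s)"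
  then have "a i \<in> set_pmf (marg (\<pi> h s) i)" for i
    by (simp add: marginalize_def set_Pi_pmf PiE_dflt_def)
  moreover have "set_pmf (marg (\<pi> h s) i) \<subseteq> A i" for i
    using assms by (simp add: joint_policy_def set_pmf_marg_subset)
  ultimately show "a \<in> joint_actions A"
    by (auto simp: joint_actions_def)
qed

lemma joint_policy_deviate:
  assumes "player_policy A i \<mu>" and "joint_policy A \<sigma>"
  shows "joint_policy A (deviate i \<mu> \<sigma>)"
  using assms by (fastforce simp: joint_policy_def deviate_def player_policy_def joint_actions_def)

lemma sum_eq_0_bounded_above:
  fixes D :: "'i::finite \<Rightarrow> real"
  assumes sum: "(\<Sum>k\<in>UNIV. D k) = 0" and bound: "\<And>k. D k \<le> \<epsilon>"
  shows "0 \<le> \<epsilon>" and "- D i \<le> (real CARD('i) - 1) * \<epsilon>"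
proof -
  have "0 \<le> real CARD('i) * \<epsilon>"
    using sum_bounded_above[of UNIV D \<epsilon>] sum bound by simp
  then show "0 \<le> \<epsilon>"
    by (simp add: zero_le_mult_iff)
  have "(\<Sum>k\<in>UNIV - {i}. D k) \<le> real (card (UNIV - {i})) * \<epsilon>"
    using bound by (rule sum_bounded_above)
  moreover have "real (card (UNIV - {i})) = real CARD('i) - 1"
    by (simp add: card_Diff_singleton of_nat_diff Suc_leI)
  moreover have "(\<Sum>k\<in>UNIV. D k) = D i + (\<Sum>k\<in>UNIV - {i}. D k)"
    by (simp add: sum.remove)
  ultimately show "- D i \<le> (real CARD('i) - 1) * \<epsilon>"
    using sum by simp
qed

locale pairwise_zero_sum_CCE =
  fixes A :: "'i::finite \<Rightarrow> 'a set" and E :: "'i \<Rightarrow> 'i \<Rightarrow> bool"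
    and V :: "(nat \<Rightarrow> 's \<Rightarrow> ('i \<Rightarrow> 'a) pmf) \<Rightarrow> 'i \<Rightarrow> real"
    and \<pi> :: "nat \<Rightarrow> 's \<Rightarrow> ('i \<Rightarrow> 'a) pmf" and \<epsilon> :: real
  assumes loop_free: "\<not> E i i"
    and payoff_pairwise: "joint_policy A \<sigma> \<Longrightarrow> joint_policy A \<tau> \<Longrightarrow>
        (\<And>h s. same_pair_marginals {j. E i j} i (\<sigma> h s) (\<tau> h s)) \<Longrightarrow> V \<sigma> i = V \<tau> i"
    and payoff_zero_sum: "joint_policy A \<sigma> \<Longrightarrow> (\<Sum>i\<in>UNIV. V \<sigma> i) = 0"
    and joint_policy: "joint_policy A \<pi>"
    and CCE: "player_policy A i \<mu> \<Longrightarrow> V (deviate i \<mu> \<pi>) i - V \<pi> i \<le> \<epsilon>"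
begin

lemma marginalize_gain_le: "V (marginalize \<pi>) i - V \<pi> i \<le> \<epsilon>"
proof -
  have "V (marginalize \<pi>) i = V (deviate i (\<lambda>h s. marg (\<pi> h s) i) \<pi>) i"
    using loop_free
    by (intro payoff_pairwise joint_policy_marginalize joint_policy_deviate player_policy_marg
        joint_policy same_pair_marginals_marginalize) auto
  then show ?thesis
    using CCE[OF player_policy_marg[OF joint_policy]] by simp
qed

lemma sum_marginalize_gain_eq_0: "(\<Sum>i\<in>UNIV. V (marginalize \<pi>) i - V \<pi> i) = 0"
  using payoff_zero_sum[OF joint_policy] payoff_zero_sum[OF joint_policy_marginalize[OF joint_policy]]
  by (simp add: sum_subtractf)

lemma epsilon_nonneg: "0 \<le> \<epsilon>"
  using sum_eq_0_bounded_above(1)[OF sum_marginalize_gain_eq_0 marginalize_gain_le] .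

lemma deviation_gain_marginalize_le:
  assumes \<mu>: "player_policy A i \<mu>"
  shows "V (deviate i \<mu> (marginalize \<pi>)) i - V (marginalize \<pi>) i \<le> real CARD('i) * \<epsilon>"
proof -
  have "V (deviate i \<mu> (marginalize \<pi>)) i = V (deviate i \<mu> \<pi>) i"
    using loop_free
    by (intro payoff_pairwise joint_policy_deviate[OF \<mu>] joint_policy_marginalize joint_policy
        same_pair_marginals_deviate_marginalize) auto
  moreover have "- (V (marginalize \<pi>) i - V \<pi> i) \<le> (real CARD('i) - 1) * \<epsilon>"
    using sum_eq_0_bounded_above(2)[OF sum_marginalize_gain_eq_0 marginalize_gain_le] .
  ultimately show ?thesis
    using CCE[OF \<mu>] by (simp add: left_diff_distrib)
qed

end

lemma marginalize_approx_NE_inf: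
  fixes \<pi> :: "nat \<Rightarrow> 's::finite \<Rightarrow> ('i::finite \<Rightarrow> 'a) pmf"
  assumes game: "zero_sum_NMG_inf E A P r \<gamma>" and cce: "approx_CCE_inf A P r \<gamma> \<pi> \<epsilon>"
  shows "approx_NE_inf A P r \<gamma> (marginalize \<pi>) ((real CARD('i) + 1) * \<epsilon> / (1 - \<gamma>))"
  unfolding approx_NE_inf_def approx_CCE_inf_def
proof (intro conjI allI impI)
  have \<pi>: "joint_policy A \<pi>"
    using cce by (simp add: approx_CCE_inf_def)
  then show "joint_policy A (marginalize \<pi>)"
    by (rule joint_policy_marginalize)
  show "product_policy (marginalize \<pi>)"
    by (auto simp: product_policy_def marginalize_def)
  fix i and \<mu> :: "nat \<Rightarrow> 's \<Rightarrow> 'a pmf" and h and \<rho> :: "'s pmf"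
  assume \<mu>: "player_policy A i \<mu>"
  have "0 \<le> \<gamma>" "\<gamma> < 1"
    using game by (simp_all add: zero_sum_NMG_inf_def)
  interpret pairwise_zero_sum_CCE A E "\<lambda>\<sigma> i. V_inf P r \<gamma> \<sigma> i h \<rho>" \<pi> \<epsilon>
  proof
    show "\<not> E k k" for k
      using game by (simp add: zero_sum_NMG_inf_def connected_graph_def)
    show "V_inf P r \<gamma> \<sigma> k h \<rho> = V_inf P r \<gamma> \<tau> k h \<rho>"
      if "joint_policy A \<sigma>" "joint_policy A \<tau>" "\<And>h s. same_pair_marginals {j. E k j} k (\<sigma> h s) (\<tau> h s)"
      for \<sigma> \<tau> k
      using V_inf_eq_if_same_pair_marginals[OF game that] .
    show "(\<Sum>k\<in>UNIV. V_inf P r \<gamma> \<sigma> k h \<rho>) = 0" if "joint_policy A \<sigma>" for \<sigma>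
      using sum_V_inf_eq_0[OF game that] .
    show "joint_policy A \<pi>"
      by (fact \<pi>)
    show "V_inf P r \<gamma> (deviate k \<nu> \<pi>) k h \<rho> - V_inf P r \<gamma> \<pi> k h \<rho> \<le> \<epsilon>" if "player_policy A k \<nu>" for k \<nu>
      using cce that unfolding approx_CCE_inf_def by blast
  qed
  have "V_inf P r \<gamma> (deviate i \<mu> (marginalize \<pi>)) i h \<rho> - V_inf P r \<gamma> (marginalize \<pi>) i h \<rho>
      \<le> real CARD('i) * \<epsilon>"
    by (rule deviation_gain_marginalize_le[OF \<mu>])
  also have "\<dots> \<le> (real CARD('i) + 1) * \<epsilon> / (1 - \<gamma>)"
    using epsilon_nonneg \<open>0 \<le> \<gamma>\<close> \<open>\<gamma> < 1\<close> by (simp add: le_divide_eq algebra_simps mult_nonneg_nonneg)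
  finally show "V_inf P r \<gamma> (deviate i \<mu> (marginalize \<pi>)) i h \<rho> - V_inf P r \<gamma> (marginalize \<pi>) i h \<rho>
      \<le> (real CARD('i) + 1) * \<epsilon> / (1 - \<gamma>)" .
qed

lemma marginalize_approx_NE_fin:
  fixes \<pi> :: "nat \<Rightarrow> 's::finite \<Rightarrow> ('i::finite \<Rightarrow> 'a) pmf"
  assumes game: "zero_sum_NMG_fin H E A P r \<gamma>" and cce: "approx_CCE_fin H A P r \<gamma> \<pi> \<epsilon>"
  shows "approx_NE_fin H A P r \<gamma> (marginalize \<pi>) ((real CARD('i) + 1) * real H * \<epsilon>)"
  unfolding approx_NE_fin_def approx_CCE_fin_def
proof (intro conjI allI impI)
  have \<pi>: "joint_policy A \<pi>"
    using cce by (simp add: approx_CCE_fin_def)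
  then show "joint_policy A (marginalize \<pi>)"
    by (rule joint_policy_marginalize)
  show "product_policy (marginalize \<pi>)"
    by (auto simp: product_policy_def marginalize_def)
  fix i and \<mu> :: "nat \<Rightarrow> 's \<Rightarrow> 'a pmf" and h and \<rho> :: "'s pmf"
  assume \<mu>: "player_policy A i \<mu>" and "h < H"
  interpret pairwise_zero_sum_CCE A E "\<lambda>\<sigma> i. V_fin H P r \<gamma> \<sigma> i h \<rho>" \<pi> \<epsilon>
  proof
    show "\<not> E k k" for k
      using game by (simp add: zero_sum_NMG_fin_def connected_graph_def)
    show "V_fin H P r \<gamma> \<sigma> k h \<rho> = V_fin H P r \<gamma> \<tau> k h \<rho>"
      if "joint_policy A \<sigma>" "joint_policy A \<tau>" "\<And>h s. same_pair_marginals {j. E k j} k (\<sigma> h s) (\<tau> h s)"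
      for \<sigma> \<tau> k
      using V_fin_eq_if_same_pair_marginals[OF game that] .
    show "(\<Sum>k\<in>UNIV. V_fin H P r \<gamma> \<sigma> k h \<rho>) = 0" if "joint_policy A \<sigma>" for \<sigma>
      using sum_V_fin_eq_0[OF game that] .
    show "joint_policy A \<pi>"
      by (fact \<pi>)
    show "V_fin H P r \<gamma> (deviate k \<nu> \<pi>) k h \<rho> - V_fin H P r \<gamma> \<pi> k h \<rho> \<le> \<epsilon>" if "player_policy A k \<nu>" for k \<nu>
      using cce that \<open>h < H\<close> unfolding approx_CCE_fin_def by blast
  qed
  have "V_fin H P r \<gamma> (deviate i \<mu> (marginalize \<pi>)) i h \<rho> - V_fin H P r \<gamma> (marginalize \<pi>) i h \<rho>
      \<le> real CARD('i) * \<epsilon>"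
    by (rule deviation_gain_marginalize_le[OF \<mu>])
  also have "\<dots> \<le> (real CARD('i) + 1) * real H * \<epsilon>"
  proof (rule mult_right_mono[OF _ epsilon_nonneg])
    have "real CARD('i) \<le> (real CARD('i) + 1) * 1" by simp
    also have "\<dots> \<le> (real CARD('i) + 1) * real H"
      using \<open>h < H\<close> by (intro mult_left_mono) auto
    finally show "real CARD('i) \<le> (real CARD('i) + 1) * real H" .
  qed
  finally show "V_fin H P r \<gamma> (deviate i \<mu> (marginalize \<pi>)) i h \<rho> - V_fin H P r \<gamma> (marginalize \<pi>) i h \<rho>
      \<le> (real CARD('i) + 1) * real H * \<epsilon>" .
qed

theorem proposition3:
  shows
  "(\<forall>(E :: 'i::finite \<Rightarrow> 'i \<Rightarrow> bool) (A :: 'i \<Rightarrow> 'a set) (P :: 's::finite \<Rightarrow> ('i \<Rightarrow> 'a) \<Rightarrow> 's pmf)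
       r \<gamma> \<pi> \<epsilon>.
       zero_sum_NMG_inf E A P r \<gamma> \<and> approx_CCE_inf A P r \<gamma> \<pi> \<epsilon> \<longrightarrow>
       approx_NE_inf A P r \<gamma> (marginalize \<pi>)
         ((real CARD('i) + 1) * \<epsilon> / (1 - \<gamma>)))
   \<and>
   (\<forall>H (E :: 'i \<Rightarrow> 'i \<Rightarrow> bool) (A :: 'i \<Rightarrow> 'a set) (P :: nat \<Rightarrow> 's \<Rightarrow> ('i \<Rightarrow> 'a) \<Rightarrow> 's pmf)
       r \<gamma> \<pi> \<epsilon>.
       zero_sum_NMG_fin H E A P r \<gamma> \<and> approx_CCE_fin H A P r \<gamma> \<pi> \<epsilon> \<longrightarrow>
       approx_NE_fin H A P r \<gamma> (marginalize \<pi>)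
         ((real CARD('i) + 1) * real H * \<epsilon>))"
  using marginalize_approx_NE_inf marginalize_approx_NE_fin by blast

end
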